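(* Let $f(z)=\sum_{n\ge0} a_n z^{-n}\in\mathbb{C}[[z^{-1}]]$ be a Gevrey-1 formal series with Borel transform $\widetilde f(\zeta)=\sum_{n\ge1} \frac{a_n\zeta^{n-1}}{(n-1)!}$. Let $\lambda>0$ and assume that $\widetilde f$ extends holomorphically to $\Delta_\lambda$ and that there exist $A>0$, $B>0$ with $|\widetilde f(\zeta)|\le A e^{B|\zeta|}$ for all $\zeta\in\Delta_\lambda$. Put $a_n^{(\lambda)}=\lambda^{n-1}a_n$ and $b_n^{(\lambda)}=\frac{1}{n!}\sum_{k=1}^{n+1}(-1)^{n-k+1}\mathfrak{s}(n,k-1)\,a_k^{(\lambda)}$. Then for every $n\ge0$, $$|b_n^{(\lambda)}|\le\frac{A\,(n+\lambda B)^{n+\lambda B}}{(\lambda B)^{\lambda B}\,n^n}$$ (with the convention $0^0=1$).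
   Context: $\Delta$ is the image of the open disc $D(1,1)=\{s:|s-1|<1\}$ under $s\mapsto-\ln s$ (principal logarithm), and $\Delta_\lambda=\{\lambda\zeta:\zeta\in\Delta\}$. Gevrey-1 means $|a_n|\le CK^nn!$ for some constants. Stirling numbers of the first kind: $\prod_{k=0}^{n-1}(x-k)=\sum_{k=0}^n\mathfrak{s}(n,k)x^k$. *)

theory Defs
  imports "HOL-Analysis.Analysis" "HOL-Computational_Algebra.Polynomial"
begin

definition stirling1_signed :: "nat \<Rightarrow> nat \<Rightarrow> int" where
  "stirling1_signed n k = coeff (\<Prod>j<n. [:- of_nat j, 1:] :: int poly) k"

definition gevrey1 :: "(nat \<Rightarrow> complex) \<Rightarrow> bool" where
  "gevrey1 a \<longleftrightarrow> (\<exists>C K. \<forall>n. norm (a n) \<le> C * K ^ n * fact n)"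

definition Delta :: "complex set" where
  "Delta = (\<lambda>s. - Ln s) ` ball 1 1"

definition Delta_lam :: "real \<Rightarrow> complex set" where
  "Delta_lam lam = (\<lambda>\<zeta>. complex_of_real lam * \<zeta>) ` Delta"

definition borel_term :: "(nat \<Rightarrow> complex) \<Rightarrow> complex \<Rightarrow> nat \<Rightarrow> complex" where
  "borel_term a \<zeta> m = a (Suc m) * \<zeta> ^ m / fact m"

definition a_lam :: "real \<Rightarrow> (nat \<Rightarrow> complex) \<Rightarrow> nat \<Rightarrow> complex" where
  "a_lam lam a n = complex_of_real (lam ^ (n - 1)) * a n"

definition b_lam :: "real \<Rightarrow> (nat \<Rightarrow> complex) \<Rightarrow> nat \<Rightarrow> complex" where
  "b_lam lam a n = (1 / fact n) *
     (\<Sum>k=1..n+1. (-1) ^ (n + 1 - k) * of_int (stirling1_signed n (k - 1)) * a_lam lam a k)"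

end

theory Submission
  imports Defs "HOL-Complex_Analysis.Complex_Analysis" "HOL-Combinatorics.Stirling"
begin

text \<open>
  Let \<open>H(t) = g(-\<lambda> Ln(1 - t))\<close> on the unit disc. Since \<open>-Ln(1 - t) = \<Sum>\<^sub>n t\<^sup>n / n\<close> and
  \<open>(-Ln(1 - t))\<^sup>m / m! = \<Sum>\<^sub>n [n, m] t\<^sup>n / n!\<close>, where \<open>[n, m]\<close> are the unsigned Stirling
  numbers of the first kind, substituting into the Borel series shows that the \<open>b\<^sub>n\<close> are the
  Taylor coefficients of \<open>H\<close> at \<open>0\<close>. The map \<open>t \<mapsto> -Ln(1 - t)\<close> sends the unit disc into \<open>\<Delta>\<close>
  and \<open>|Ln(1 - t)| \<le> -ln(1 - |t|)\<close>, so the exponential bound on the Borel transform becomes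
  \<open>|H(t)| \<le> A (1 - |t|)\<^sup>-\<^sup>\<lambda>\<^sup>B\<close>, and Cauchy's inequality on the circle of radius \<open>n / (n + \<lambda>B)\<close>
  gives the bound.
\<close>

lemma stirling1_signed_eq: "stirling1_signed n k = (-1) ^ (n + k) * int (stirling n k)"
proof -
  have minus_one: "(- 1 :: int poly) = monom (-1) 0"
    by (simp add: monom_0 one_pCons)
  have minus_X: "(- [:0, 1:] :: int poly) = monom (-1) 1"
    by (simp add: monom_Suc monom_0 one_pCons)
  have "(\<Prod>j<n. [:- of_nat j, 1:] :: int poly) = (\<Prod>j<n. - 1 * (- [:0, 1:] + of_nat j))"
    by (intro prod.cong) (simp_all add: of_nat_poly)
  also have "\<dots> = (-1) ^ n * pochhammer (- [:0, 1:]) n"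
    by (subst prod.distrib) (simp add: pochhammer_prod atLeast0LessThan)
  also have "\<dots> = (\<Sum>i\<le>n. monom ((-1) ^ (n + i) * int (stirling n i)) i)"
    unfolding stirling_pochhammer[symmetric] sum_distrib_left minus_one minus_X
      of_nat_monom monom_power mult_monom
    by (simp add: power_add mult_ac)
  finally show ?thesis
    by (cases "k \<le> n") (auto simp: stirling1_signed_def coeff_sum)
qed

lemma stirling1_signed_sign_eq:
  assumes "k \<le> n"
  shows "(-1) ^ (n - k) * (of_int (stirling1_signed n k) :: 'a :: ring_1) = of_nat (stirling n k)"
proof -
  have "(-1) ^ (n - k) * (-1) ^ (n + k) = ((-1) ^ (2 * n) :: int)"
    using assms by (simp flip: power_add)
  then have "(-1) ^ (n - k) * stirling1_signed n k = int (stirling n k)"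
    by (simp add: stirling1_signed_eq mult.assoc)
  then have "of_int ((-1) ^ (n - k) * stirling1_signed n k) = (of_int (int (stirling n k)) :: 'a)"
    by (rule arg_cong)
  then show ?thesis
    by simp
qed

lemma stirling_Suc_Suc_div_fact:
  "(of_nat (stirling (Suc n) (Suc m)) :: 'a :: field_char_0) / fact n =
     (\<Sum>i\<le>n. of_nat (stirling i m) / fact i)"
proof (induction n)
  case 0
  then show ?case by (cases m) auto
next
  case (Suc n)
  have "(of_nat (stirling (Suc (Suc n)) (Suc m)) :: 'a) / fact (Suc n) =
      (of_nat (Suc n) * of_nat (stirling (Suc n) (Suc m)) + of_nat (stirling (Suc n) m)) / fact (Suc n)"
    by (simp only: stirling.simps(4) of_nat_add of_nat_mult)
  also have "\<dots> = of_nat (stirling (Suc n) (Suc m)) / fact n + of_nat (stirling (Suc n) m) / fact (Suc n)"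
    by (simp add: add_divide_distrib del: of_nat_Suc stirling.simps)
  finally show ?case
    using Suc.IH by (simp del: stirling.simps)
qed

text \<open>The constant coefficient is \<open>1 / 0 = 0\<close>.\<close>
definition fps_neg_ln_one_minus :: "'a :: field_char_0 fps" where
  "fps_neg_ln_one_minus = Abs_fps (\<lambda>n. 1 / of_nat n)"

definition fps_stirling_egf :: "nat \<Rightarrow> 'a :: field_char_0 fps" where
  "fps_stirling_egf m = Abs_fps (\<lambda>n. of_nat (stirling n m) / fact n)"

lemma fps_deriv_neg_ln_one_minus: "fps_deriv fps_neg_ln_one_minus = Abs_fps (\<lambda>_. 1)"
  by (rule fps_ext) (simp add: fps_neg_ln_one_minus_def del: of_nat_Suc)

lemma fps_deriv_stirling_egf:
  "fps_deriv (fps_stirling_egf (Suc m)) = fps_stirling_egf m * Abs_fps (\<lambda>_. 1)" (is "?l = ?r")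
proof (rule fps_ext)
  fix n
  have "fps_nth ?l n = of_nat (stirling (Suc n) (Suc m)) / fact n"
    unfolding fps_stirling_egf_def by (simp del: of_nat_Suc)
  also have "\<dots> = fps_nth ?r n"
    unfolding stirling_Suc_Suc_div_fact fps_stirling_egf_def fps_mult_nth
    by (simp add: atLeast0AtMost)
  finally show "fps_nth ?l n = fps_nth ?r n" .
qed

lemma fps_neg_ln_one_minus_power:
  "fps_neg_ln_one_minus ^ m = fps_const (fact m) * fps_stirling_egf m"
proof (induction m)
  case 0
  show ?case by (rule fps_ext) (auto simp: fps_stirling_egf_def)
next
  case (Suc m)
  let ?P = "fps_neg_ln_one_minus ^ Suc m :: 'a fps"
    and ?Q = "fps_const (fact (Suc m)) * fps_stirling_egf (Suc m)"
  have "fps_deriv ?P = of_nat (Suc m) * Abs_fps (\<lambda>_. 1) * (fps_const (fact m) * fps_stirling_egf m)"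
    by (simp only: fps_deriv_power' fps_deriv_neg_ln_one_minus Suc.IH diff_Suc_1)
  also have "\<dots> = fps_deriv ?Q"
    by (simp add: fps_deriv_stirling_egf fps_of_nat[symmetric] mult_ac del: of_nat_Suc)
  finally have "?P = fps_const (fps_nth ?P 0 - fps_nth ?Q 0) + ?Q"
    by (rule fps_deriv_eq_iff[THEN iffD1])
  moreover have "fps_nth ?P 0 = 0" and "fps_nth ?Q 0 = 0"
    by (simp_all add: fps_neg_ln_one_minus_def fps_stirling_egf_def fps_nth_power_0 del: power_Suc)
  ultimately show ?case
    by (metis add_0 diff_self fps_const_0_eq_0)
qed

definition fps_borel :: "(nat \<Rightarrow> 'a) \<Rightarrow> 'a :: field_char_0 fps" where
  "fps_borel a = Abs_fps (\<lambda>m. a (Suc m) / fact m)"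

lemma fps_borel_compose_nth:
  "fps_nth (fps_borel a oo fps_const (of_real lam) * fps_neg_ln_one_minus) n = b_lam lam a n"
proof -
  have power_nth: "fps_nth ((fps_const (of_real lam) * fps_neg_ln_one_minus) ^ i) n =
      of_real lam ^ i * (fact i * of_nat (stirling n i) / fact n)" for i
    by (simp add: power_mult_distrib fps_neg_ln_one_minus_power fps_stirling_egf_def)
  have "fps_nth (fps_borel a oo fps_const (of_real lam) * fps_neg_ln_one_minus) n =
      (\<Sum>i=0..n. a (Suc i) / fact i * (of_real lam ^ i * (fact i * of_nat (stirling n i) / fact n)))"
    by (simp add: fps_compose_nth power_nth fps_borel_def)
  also have "\<dots> = (1 / fact n) * (\<Sum>i=0..n. of_nat (stirling n i) * (of_real (lam ^ i) * a (Suc i)))"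
    by (simp add: sum_distrib_left field_simps)
  also have "\<dots> = (1 / fact n) * (\<Sum>i=0..n. (-1) ^ (n + 1 - Suc i) *
      of_int (stirling1_signed n (Suc i - 1)) * a_lam lam a (Suc i))"
    by (intro arg_cong2[where f = "(*)"] refl sum.cong) (auto simp: a_lam_def stirling1_signed_sign_eq)
  also have "\<dots> = b_lam lam a n"
    unfolding b_lam_def
    by (simp add: image_Suc_atLeastAtMost[symmetric] sum.reindex del: image_Suc_atLeastAtMost)
  finally show ?thesis .
qed

lemma sums_neg_Ln_one_minus:
  fixes t :: complex
  assumes "norm t < 1"
  shows "(\<lambda>n. fps_nth fps_neg_ln_one_minus n * t ^ n) sums (- Ln (1 - t))"
proof -
  have "(\<lambda>n. - ((- (-t)) ^ n) / of_nat n) sums ln (1 + (-t))"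
    by (rule Ln_series') (use assms in simp)
  from sums_minus[OF this] show ?thesis
    by (simp add: fps_neg_ln_one_minus_def)
qed

lemma has_fps_expansion_neg_Ln_one_minus:
  "(\<lambda>t. - Ln (1 - t)) has_fps_expansion fps_neg_ln_one_minus"
proof (rule has_fps_expansionI)
  have "eventually (\<lambda>t. t \<in> ball 0 1) (nhds (0::complex))"
    by (rule eventually_nhds_in_open) auto
  then show "eventually (\<lambda>t. (\<lambda>n. fps_nth fps_neg_ln_one_minus n * t ^ n) sums (- Ln (1 - t))) (nhds 0)"
    by eventually_elim (simp add: sums_neg_Ln_one_minus)
qed

lemma norm_Ln_one_minus_le:
  fixes t :: complex
  assumes "norm t < 1"
  shows "norm (Ln (1 - t)) \<le> - ln (1 - norm t)"
proof -
  have "(\<lambda>n. - ((- (- norm t)) ^ n) / of_nat n) sums ln (1 + (- norm t))"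
    by (rule ln_series') (use assms in simp)
  from sums_minus[OF this]
  have "(\<lambda>n. norm (fps_nth fps_neg_ln_one_minus n * t ^ n)) sums (- ln (1 - norm t))"
    by (simp add: fps_neg_ln_one_minus_def norm_divide norm_power)
  then have "norm (- Ln (1 - t)) \<le> - ln (1 - norm t)"
    using sums_neg_Ln_one_minus[OF assms]
    by (metis sums_unique summable_norm sums_summable)
  then show ?thesis by simp
qed

lemma holomorphic_on_Ln_one_minus: "(\<lambda>t. Ln (1 - t)) holomorphic_on ball 0 1"
proof (intro holomorphic_intros)
  fix t :: complex
  assume "t \<in> ball 0 1"
  then have "Re (1 - t) > 0"
    using complex_Re_le_cmod[of t] by simp
  then show "1 - t \<notin> \<real>\<^sub>\<le>\<^sub>0"
    by (auto simp: complex_nonpos_Reals_iff)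
qed

lemma has_fps_expansion_fps_borel:
  assumes "r > 0" "\<forall>\<zeta>\<in>ball 0 r. borel_term a \<zeta> sums g \<zeta>"
  shows "g has_fps_expansion fps_borel a"
proof (rule has_fps_expansionI)
  have "borel_term a \<zeta> = (\<lambda>n. fps_nth (fps_borel a) n * \<zeta> ^ n)" for \<zeta>
    by (auto simp: fps_borel_def borel_term_def)
  moreover have "eventually (\<lambda>\<zeta>. \<zeta> \<in> ball 0 r) (nhds 0)"
    by (rule eventually_nhds_in_open) (use assms in auto)
  ultimately show "eventually (\<lambda>\<zeta>. (\<lambda>n. fps_nth (fps_borel a) n * \<zeta> ^ n) sums g \<zeta>) (nhds 0)"
    using assms(2) by (metis (mono_tags, lifting) eventually_mono)
qed

lemma norm_fps_expansion_nth_le: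
  fixes f :: "complex \<Rightarrow> complex" and A c :: real
  assumes "c > 0" and "f holomorphic_on ball 0 1" and "f has_fps_expansion F"
    and growth: "\<And>t. norm t < 1 \<Longrightarrow> norm (f t) \<le> A / (1 - norm t) powr c"
  shows "norm (fps_nth F n) \<le> A * (real n + c) powr (real n + c) / (c powr c * real n ^ n)"
proof (cases "n = 0")
  case True
  then show ?thesis
    using growth[of 0] fps_nth_fps_expansion[OF assms(3), of 0] assms(1) by simp
next
  case False
  \<comment> \<open>this radius minimises \<open>\<rho>\<^sup>-\<^sup>n (1 - \<rho>)\<^sup>-\<^sup>c\<close>\<close>
  define \<rho> where "\<rho> = real n / (real n + c)"
  have \<rho>: "0 < \<rho>" "\<rho> < 1" and one_minus_\<rho>: "1 - \<rho> = c / (real n + c)"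
    using False assms(1) by (auto simp: \<rho>_def field_simps)
  have "norm ((deriv ^^ n) f 0) \<le> fact n * (A / (1 - \<rho>) powr c) / \<rho> ^ n"
  proof (rule Cauchy_inequality)
    show "f holomorphic_on ball 0 \<rho>" and "continuous_on (cball 0 \<rho>) f"
      using \<rho> by (auto intro: holomorphic_on_subset[OF assms(2)]
          continuous_on_subset[OF holomorphic_on_imp_continuous_on[OF assms(2)]])
    show "norm (f t) \<le> A / (1 - \<rho>) powr c" if "norm (0 - t) = \<rho>" for t
      using growth[of t] that \<rho> by simp
  qed (use \<rho> in simp)
  then have "norm (fps_nth F n) \<le> A / (1 - \<rho>) powr c / \<rho> ^ n"
    by (simp add: fps_nth_fps_expansion[OF assms(3)] norm_divide field_simps)
  also have "\<dots> = A * (real n + c) powr (real n + c) / (c powr c * real n ^ n)"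
    using False assms(1)
    by (simp add: one_minus_\<rho> \<rho>_def powr_divide powr_add powr_realpow field_simps)
  finally show ?thesis .
qed

theorem lemma3p4:
  fixes a :: "nat \<Rightarrow> complex" and lam A B :: real and g :: "complex \<Rightarrow> complex"
  assumes "gevrey1 a"
    and "lam > 0"
    and "g holomorphic_on Delta_lam lam"
    and "\<exists>r>0. \<forall>\<zeta>\<in>ball 0 r. borel_term a \<zeta> sums g \<zeta>"
    and "A > 0" and "B > 0"
    and "\<forall>\<zeta>\<in>Delta_lam lam. norm (g \<zeta>) \<le> A * exp (B * norm \<zeta>)"
  shows "\<forall>n. norm (b_lam lam a n) \<le>
     A * (real n + lam * B) powr (real n + lam * B) / ((lam * B) powr (lam * B) * real n ^ n)"
proof
  fix n
  obtain r where r: "r > 0" "\<forall>\<zeta>\<in>ball 0 r. borel_term a \<zeta> sums g \<zeta>"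
    using assms(4) by blast
  define L where "L t = of_real lam * - Ln (1 - t)" for t
  have L_Delta: "L t \<in> Delta_lam lam" if "norm t < 1" for t
    unfolding L_def Delta_lam_def Delta_def using that by (intro imageI) (simp add: dist_norm)
  have "lam * B > 0"
    using assms(2,6) by simp
  moreover have "(g \<circ> L) holomorphic_on ball 0 1"
    using L_Delta unfolding L_def
    by (intro holomorphic_on_compose_gen[OF _ assms(3)] holomorphic_intros holomorphic_on_Ln_one_minus) auto
  moreover have "(g \<circ> L) has_fps_expansion (fps_borel a oo fps_const (of_real lam) * fps_neg_ln_one_minus)"
    unfolding L_def
    by (intro has_fps_expansion_compose has_fps_expansion_fps_borel[OF r]
        has_fps_expansion_cmult_left has_fps_expansion_neg_Ln_one_minus)
      (simp add: fps_neg_ln_one_minus_def)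
  moreover have "norm ((g \<circ> L) t) \<le> A / (1 - norm t) powr (lam * B)" if "norm t < 1" for t
  proof -
    have "norm (g (L t)) \<le> A * exp (B * norm (L t))"
      using assms(7) L_Delta[OF that] by blast
    also have "\<dots> \<le> A * exp (lam * B * - ln (1 - norm t))"
      using mult_left_mono[OF norm_Ln_one_minus_le[OF that], of "lam * B"] assms(2,5,6)
      by (simp add: L_def norm_mult mult_ac)
    also have "\<dots> = A / (1 - norm t) powr (lam * B)"
      using that by (simp add: powr_def exp_minus field_simps)
    finally show ?thesis by simp
  qed
  ultimately show "norm (b_lam lam a n) \<le>
     A * (real n + lam * B) powr (real n + lam * B) / ((lam * B) powr (lam * B) * real n ^ n)"
    unfolding fps_borel_compose_nth[symmetric] by (rule norm_fps_expansion_nth_le)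
qed

end
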